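(* Let $\alpha>1$, $k_1>1+\frac{1}{\alpha-1}$, $\delta\in(0,1)$, $f(t,\delta)=\log\big(\frac{4k_1Kdt^\alpha}{\delta}\big)$ and $g(t,\delta)=4\log\big(\frac{4k_1K5^dt^\alpha}{\delta}\big)$. Then for all $T$, $$\mathbb{P}_\nu\big((\mathcal{E}^T)^c\big)\le\frac{\delta}{4k_1}\Big(\frac T2\Big)^{1-\alpha}(\log T+1)f(T,\delta)+\frac{\delta}{4k_1}\Big(\frac T2\Big)^{1-\alpha}(\log T+1)f(T,\delta d/5^d),$$ where $\mathcal{E}^T=\bigcap_{\lceil T/2\rceil\le t\le T}\mathcal{E}_t$. Moreover, $\mathbb{P}_\nu(\mathcal{E}^c)\le\delta$, where $\mathcal{E}=\bigcap_{t\ge1}\mathcal{E}_t$.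
   Context: Bandit $\nu=(\nu_1,\dots,\nu_K)$ of distributions on $\mathbb{R}^d$ with means $\mu_1,\dots,\mu_K$, each marginally $\sigma$-subGaussian (each coordinate $X^c$ satisfies $\mathbb{E}[e^{\lambda(X^c-\mathbb{E}X^c)}]\le e^{\lambda^2\sigma^2/2}$ for all $\lambda$) and norm-$\sigma_u$-subGaussian ($X^\top z$ is $\sigma_u$-subGaussian for every unit vector $z$). Samples are collected sequentially by an algorithm choosing arms based on the past, each observation being an independent draw from the chosen arm. $N_{t,i}$ is the number of pulls of arm $i$ up to round $t$ and $\hat\mu_{t,i}$ the empirical mean. $\beta_i(t,\delta)=\sqrt{2\sigma^2f(t,\delta)/N_{t,i}}$, $U_i(t,\delta)=\sqrt{2\sigma_u^2g(t,\delta)/N_{t,i}}$, and $\mathcal{E}_t$ is the event that for all $i\in[K]$, $\|\hat\mu_{t,i}-\mu_i\|_\infty\le\beta_i(t,\delta)$ and $\|\hat\mu_{t,i}-\mu_i\|_2\le U_i(t,\delta)$. *)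

theory Defs
  imports "HOL-Probability.Probability"
begin

definition subgaussian :: "'a measure \<Rightarrow> ('a \<Rightarrow> real) \<Rightarrow> real \<Rightarrow> bool" where
  "subgaussian M X \<sigma> \<longleftrightarrow>
     integrable M X \<and>
     (\<forall>l::real. integrable M (\<lambda>x. exp (l * (X x - (\<integral>y. X y \<partial>M)))) \<and>
        (\<integral>x. exp (l * (X x - (\<integral>y. X y \<partial>M))) \<partial>M) \<le> exp (l\<^sup>2 * \<sigma>\<^sup>2 / 2))"

definition mean_vec :: "(real ^ 'd) measure \<Rightarrow> real ^ 'd" where
  "mean_vec P = (\<chi> c. \<integral>x. x $ c \<partial>P)"

definition pulls :: "(nat \<Rightarrow> 'w \<Rightarrow> nat) \<Rightarrow> nat \<Rightarrow> nat \<Rightarrow> 'w \<Rightarrow> nat" where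
  "pulls A t i w = card {s \<in> {1..t}. A s w = i}"

definition emp_mean :: "(nat \<Rightarrow> 'w \<Rightarrow> nat) \<Rightarrow> (nat \<Rightarrow> 'w \<Rightarrow> real ^ 'd) \<Rightarrow> nat \<Rightarrow> nat \<Rightarrow> 'w \<Rightarrow> real ^ 'd" where
  "emp_mean A Y t i w = (1 / real (pulls A t i w)) *\<^sub>R (\<Sum>s\<in>{s \<in> {1..t}. A s w = i}. Y s w)"

text \<open>The good event E_t. beta and U are given as functions of (N, t).
  For an arm with N_{t,i} = 0 the confidence radii are infinite, so no constraint.\<close>
definition good_event ::
  "nat \<Rightarrow> (nat \<Rightarrow> real ^ 'd) \<Rightarrow> real \<Rightarrow> real \<Rightarrow> (nat \<Rightarrow> real) \<Rightarrow> (nat \<Rightarrow> real) \<Rightarrow>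
   (nat \<Rightarrow> 'w \<Rightarrow> nat) \<Rightarrow> (nat \<Rightarrow> 'w \<Rightarrow> real ^ 'd) \<Rightarrow> nat \<Rightarrow> 'w \<Rightarrow> bool" where
  "good_event K \<mu> \<sigma> \<sigma>u f g A Y t w \<longleftrightarrow>
     (\<forall>i<K. pulls A t i w > 0 \<longrightarrow>
        (\<forall>c. \<bar>emp_mean A Y t i w $ c - \<mu> i $ c\<bar>
               \<le> sqrt (2 * \<sigma>\<^sup>2 * f t / real (pulls A t i w))) \<and>
        norm (emp_mean A Y t i w - \<mu> i) \<le> sqrt (2 * \<sigma>u\<^sup>2 * g t / real (pulls A t i w)))"

end

(*
  Fix an arm i and a count n, and let S be the sum of the centred samples of the first n pulls
  of arm i (stopped once arm i has been pulled n times).  Each new sample of arm i is drawn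
  independently of the past, so exp (l (S . z) - l^2 sigma^2 N / 2), with N <= n the number of
  terms so far, is a supermartingale; this gives a Chernoff bound for S . z with the
  deterministic n.  Coordinates are handled with z = +-e_c, the Euclidean norm with a 1/2-net of
  the sphere of size 5^d.  If E_t fails for some t in [t0, T], some arm i has n <= t pulls and its
  first n samples deviate at the radius of round max n t0 <= t; a union bound over i and n and
  the choice of f and g give the bound sum_n 3 delta / (4 k1) * max n t0 ^ (-alpha).  For
  t0 = ceil (T/2) this is at most the first claim; for t0 = 1 it is at most
  3 delta / (4 k1) * alpha / (alpha - 1) <= delta uniformly in T, and continuity from below
  gives the second claim.
*)

theory Submission
  imports Defs
begin

lemma subgaussian_uminus:
  assumes "subgaussian M X \<sigma>"
  shows "subgaussian M (\<lambda>x. - X x) \<sigma>"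
  unfolding subgaussian_def
proof (intro conjI allI)
  have flip: "(\<lambda>x. exp (l * (- X x - (\<integral>y. - X y \<partial>M)))) = (\<lambda>x. exp ((- l) * (X x - (\<integral>y. X y \<partial>M))))"
    for l by (auto simp: algebra_simps)
  fix l :: real
  show "integrable M (\<lambda>x. - X x)"
    using assms by (simp add: subgaussian_def)
  show "integrable M (\<lambda>x. exp (l * (- X x - (\<integral>y. - X y \<partial>M))))"
    using assms unfolding flip subgaussian_def by blast
  show "(\<integral>x. exp (l * (- X x - (\<integral>y. - X y \<partial>M))) \<partial>M) \<le> exp (l\<^sup>2 * \<sigma>\<^sup>2 / 2)"
    using assms unfolding flip subgaussian_def by (metis power2_minus)
qed

lemma subgaussian_nn_integral_exp_le_1:
  assumes "subgaussian M X \<sigma>"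
  shows "(\<integral>\<^sup>+x. ennreal (exp (l * (X x - (\<integral>y. X y \<partial>M)) - l\<^sup>2 * \<sigma>\<^sup>2 / 2)) \<partial>M) \<le> 1"
proof -
  define m where "m = (\<integral>y. X y \<partial>M)"
  define b where "b = l\<^sup>2 * \<sigma>\<^sup>2 / 2"
  have int: "integrable M (\<lambda>x. exp (l * (X x - m)))"
    and le: "(\<integral>x. exp (l * (X x - m)) \<partial>M) \<le> exp b"
    using assms by (auto simp: subgaussian_def m_def b_def)
  have "(\<integral>\<^sup>+x. ennreal (exp (l * (X x - m) - b)) \<partial>M) = ennreal (\<integral>x. exp (l * (X x - m)) / exp b \<partial>M)"
    using int by (subst nn_integral_eq_integral) (auto simp: exp_diff)
  also have "\<dots> \<le> 1"
    using le by simp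
  finally show ?thesis by (simp add: m_def b_def)
qed

lemma integrable_component_if_subgaussian_inner:
  fixes P :: "(real ^ 'd) measure"
  assumes "\<And>z. norm z = 1 \<Longrightarrow> subgaussian P (\<lambda>x. x \<bullet> z) \<sigma>"
  shows "integrable P (\<lambda>x. x $ c)"
  using assms[of "axis c 1"] by (simp add: subgaussian_def inner_axis)

lemma mean_vec_inner:
  fixes P :: "(real ^ 'd) measure"
  assumes "\<And>c. integrable P (\<lambda>x. x $ c)"
  shows "(\<integral>x. x \<bullet> z \<partial>P) = mean_vec P \<bullet> z"
  using assms by (simp add: inner_vec_def mean_vec_def)

section \<open>Nets of the unit sphere\<close>

text \<open>The balls of radius \<open>1/4\<close> around the points are disjoint and lie in the ball of radius
  \<open>5/4\<close>; compare volumes.\<close>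

lemma card_separated_unit_vectors_le:
  fixes Z :: "'a::euclidean_space set"
  assumes fin: "finite Z" and unit: "\<And>z. z \<in> Z \<Longrightarrow> norm z = 1"
    and sep: "\<And>z z'. z \<in> Z \<Longrightarrow> z' \<in> Z \<Longrightarrow> z \<noteq> z' \<Longrightarrow> 1/2 < dist z z'"
  shows "card Z \<le> 5 ^ DIM('a)"
proof -
  define V where "V = unit_ball_vol DIM('a)"
  have V: "V > 0" by (simp add: V_def)
  have disj: "disjoint_family_on (\<lambda>z. ball z (1/4)) Z"
    unfolding disjoint_family_on_def
  proof (intro ballI impI equals0I)
    fix z z' y assume "z \<in> Z" "z' \<in> Z" "z \<noteq> z'" "y \<in> ball z (1/4) \<inter> ball z' (1/4)"
    then have "1/2 < dist z z'" "dist z y < 1/4" "dist z' y < 1/4" using sep by auto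
    then show False using dist_triangle[of z z' y] dist_commute[of y z'] by linarith
  qed
  have "(\<Sum>z\<in>Z. emeasure lborel (ball z (1/4))) = emeasure lborel (\<Union>z\<in>Z. ball z (1/4))"
    by (rule sum_emeasure) (use disj fin in auto)
  also have "\<dots> \<le> emeasure lborel (ball (0::'a) (5/4))"
  proof (rule emeasure_mono)
    show "(\<Union>z\<in>Z. ball z (1/4)) \<subseteq> ball 0 (5/4)"
    proof
      fix y assume "y \<in> (\<Union>z\<in>Z. ball z (1/4))"
      then obtain z where z: "z \<in> Z" "dist z y < 1/4" by auto
      have "norm y \<le> norm z + dist z y"
        by (metis dist_norm norm_triangle_sub dist_commute)
      then have "norm y < 5/4" using z unit[OF z(1)] by linarith
      then show "y \<in> ball 0 (5/4)" by simp
    qed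
  qed auto
  finally have "ennreal (real (card Z) * (V * (1/4) ^ DIM('a))) \<le> ennreal (V * (5/4) ^ DIM('a))"
    by (simp add: emeasure_ball V_def ennreal_of_nat_eq_real_of_nat ennreal_mult'[symmetric])
  then have "real (card Z) * (V * (1/4) ^ DIM('a)) \<le> V * (5/4) ^ DIM('a)"
    using V by (subst (asm) ennreal_le_iff) auto
  then have "real (card Z) * (1/4) ^ DIM('a) \<le> (5/4) ^ DIM('a)"
    using V by (simp add: mult.left_commute)
  then have "real (card Z) \<le> 5 ^ DIM('a)"
    by (simp add: power_divide divide_le_cancel)
  then have "real (card Z) \<le> real (5 ^ DIM('a))"
    by (simp only: of_nat_power of_nat_numeral)
  then show ?thesis by (simp only: of_nat_le_iff)
qed

lemma two_inner_ge_norm_if_dist_sgn_le_half: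
  fixes x z :: "'a::real_inner"
  assumes "norm z = 1" and "dist (sgn x) z \<le> 1/2"
  shows "norm x \<le> 2 * (x \<bullet> z)"
proof (cases "x = 0")
  case False
  define u where "u = sgn x"
  have "norm u = 1" using False by (simp add: u_def norm_sgn)
  have "(dist u z)\<^sup>2 = (norm u)\<^sup>2 - 2 * (u \<bullet> z) + (norm z)\<^sup>2"
    by (simp add: dist_norm power2_norm_eq_inner inner_diff_left inner_diff_right inner_commute)
  moreover have "(dist u z)\<^sup>2 \<le> (1/2)\<^sup>2"
    using assms(2) by (intro power_mono) (auto simp: u_def)
  ultimately have "1/2 \<le> u \<bullet> z"
    using \<open>norm u = 1\<close> assms(1) by (simp add: power2_eq_square)
  then have "norm x * 1 \<le> norm x * (2 * (u \<bullet> z))"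
    by (intro mult_left_mono) auto
  moreover have "x \<bullet> z = norm x * (u \<bullet> z)" using False by (simp add: u_def sgn_div_norm)
  ultimately show ?thesis by (simp add: mult_ac)
qed simp

text \<open>A maximal \<open>1/2\<close>-separated set of unit vectors is a \<open>1/2\<close>-net of the sphere.\<close>

lemma exists_unit_net:
  "\<exists>Z :: 'a::euclidean_space set. finite Z \<and> card Z \<le> 5 ^ DIM('a) \<and> (\<forall>z\<in>Z. norm z = 1)
     \<and> (\<forall>x. \<exists>z\<in>Z. norm x \<le> 2 * (x \<bullet> z))"
proof -
  define sep where "sep Z \<longleftrightarrow> finite Z \<and> (\<forall>z\<in>Z. norm (z::'a) = 1)
      \<and> (\<forall>z\<in>Z. \<forall>z'\<in>Z. z \<noteq> z' \<longrightarrow> 1/2 < dist z z')" for Z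
  have card_sep: "card Z \<le> 5 ^ DIM('a)" if "sep Z" for Z
    using that unfolding sep_def by (intro card_separated_unit_vectors_le) auto
  have "sep {}" by (simp add: sep_def)
  moreover have "\<forall>Z. sep Z \<longrightarrow> card Z < Suc (5 ^ DIM('a))"
    using card_sep by (simp add: less_Suc_eq_le)
  ultimately obtain Z where Z: "sep Z" and max: "\<And>Z'. sep Z' \<Longrightarrow> card Z' \<le> card Z"
    using ex_has_greatest_nat[of sep "{}" card] by blast
  have cover: "\<exists>z\<in>Z. dist u z \<le> 1/2" if u: "norm u = 1" for u
  proof (rule ccontr)
    assume "\<not> ?thesis"
    then have far: "\<forall>z\<in>Z. 1/2 < dist u z" by auto
    then have "u \<notin> Z" by auto
    moreover have "sep (insert u Z)"
      using Z u far unfolding sep_def by (simp add: dist_commute)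
    ultimately show False
      using max[of "insert u Z"] Z by (simp add: sep_def)
  qed
  obtain b :: 'a where "b \<in> Basis" using nonempty_Basis by blast
  then have "norm b = 1" by simp
  have "\<exists>z\<in>Z. norm x \<le> 2 * (x \<bullet> z)" for x
  proof (cases "x = 0")
    case True
    then show ?thesis using cover[OF \<open>norm b = 1\<close>] by force
  next
    case False
    then obtain z where "z \<in> Z" "dist (sgn x) z \<le> 1/2"
      using cover[of "sgn x"] by (auto simp: norm_sgn)
    moreover have "norm z = 1" using \<open>z \<in> Z\<close> Z by (simp add: sep_def)
    ultimately show ?thesis using two_inner_ge_norm_if_dist_sgn_le_half by blast
  qed
  then show ?thesis
    using Z card_sep unfolding sep_def by blast
qed

section \<open>Integrals against an independent sample\<close>

lemma distr_pair_restr_to_subalg_independent: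
  fixes N G :: "'w measure" and \<nu> :: "'b measure"
  assumes N: "finite_measure N" and sub: "subalgebra N G" and \<nu>: "finite_measure \<nu>"
    and Y: "Y \<in> measurable N \<nu>"
    and indep: "\<And>B S. B \<in> sets G \<Longrightarrow> S \<in> sets \<nu> \<Longrightarrow>
      emeasure N (B \<inter> (Y -` S \<inter> space N)) = emeasure N B * emeasure \<nu> S"
  shows "distr N (restr_to_subalg N G \<Otimes>\<^sub>M \<nu>) (\<lambda>w. (w, Y w)) = restr_to_subalg N G \<Otimes>\<^sub>M \<nu>"
    (is "distr N (?G \<Otimes>\<^sub>M \<nu>) ?p = _")
proof (rule pair_measure_eqI[symmetric])
  have sets_G: "sets ?G = sets G" "sets G \<subseteq> sets N"
    using sub by (simp_all add: sets_restr_to_subalg subalgebra_def)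
  have pair: "?p \<in> measurable N (?G \<Otimes>\<^sub>M \<nu>)"
  proof (rule measurable_Pair)
    have "(\<lambda>w. w) \<in> measurable G ?G" by (rule measurable_ident_sets) (simp add: sets_G)
    then show "(\<lambda>w. w) \<in> measurable N ?G" by (rule measurable_from_subalg[OF sub])
  qed (rule Y)
  show "sigma_finite_measure ?G"
    using finite_measure_restr_to_subalg[OF sub N] by (simp add: finite_measure_def)
  show "sigma_finite_measure \<nu>"
    using \<nu> by (simp add: finite_measure_def)
  fix B S assume "B \<in> sets ?G" and S: "S \<in> sets \<nu>"
  then have B: "B \<in> sets G" by (simp add: sets_G)
  have "?p -` (B \<times> S) \<inter> space N = B \<inter> (Y -` S \<inter> space N)"
    using B sets_G sets.sets_into_space[of B N] by auto
  then have "emeasure (distr N (?G \<Otimes>\<^sub>M \<nu>) ?p) (B \<times> S) = emeasure N (B \<inter> (Y -` S \<inter> space N))"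
    using pair B S by (simp add: emeasure_distr sets_G)
  also have "\<dots> = emeasure ?G B * emeasure \<nu> S"
    using indep[OF B S] emeasure_restr_to_subalg[OF sub B] by simp
  finally show "emeasure ?G B * emeasure \<nu> S = emeasure (distr N (?G \<Otimes>\<^sub>M \<nu>) ?p) (B \<times> S)"
    by simp
qed simp

lemma nn_integral_mult_independent_of_subalgebra:
  fixes N G :: "'w measure" and \<nu> :: "'b measure"
  assumes N: "finite_measure N" and sub: "subalgebra N G" and \<nu>: "finite_measure \<nu>"
    and Y: "Y \<in> measurable N \<nu>"
    and indep: "\<And>B S. B \<in> sets G \<Longrightarrow> S \<in> sets \<nu> \<Longrightarrow>
      emeasure N (B \<inter> (Y -` S \<inter> space N)) = emeasure N B * emeasure \<nu> S"
    and W: "W \<in> borel_measurable G" and \<psi>: "\<psi> \<in> borel_measurable \<nu>"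
  shows "(\<integral>\<^sup>+w. W w * \<psi> (Y w) \<partial>N) = (\<integral>\<^sup>+w. W w \<partial>N) * (\<integral>\<^sup>+y. \<psi> y \<partial>\<nu>)"
proof -
  interpret \<nu>: finite_measure \<nu> by fact
  define Nr where "Nr = restr_to_subalg N G"
  have W_Nr: "W \<in> borel_measurable Nr"
    using W sets_restr_to_subalg[OF sub] by (simp add: Nr_def cong: measurable_cong_sets)
  have Y_Nr: "(\<lambda>w. (w, Y w)) \<in> measurable N (Nr \<Otimes>\<^sub>M \<nu>)"
    using measurable_from_subalg[OF sub measurable_ident_sets[of G Nr]] Y sets_restr_to_subalg[OF sub]
    by (auto simp: Nr_def intro!: measurable_Pair)
  have prod: "(\<lambda>p. W (fst p) * \<psi> (snd p)) \<in> borel_measurable (Nr \<Otimes>\<^sub>M \<nu>)"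
    using W_Nr \<psi> by measurable
  have joint: "distr N (Nr \<Otimes>\<^sub>M \<nu>) (\<lambda>w. (w, Y w)) = Nr \<Otimes>\<^sub>M \<nu>"
    unfolding Nr_def using N sub \<nu> Y indep by (rule distr_pair_restr_to_subalg_independent)
  have "(\<integral>\<^sup>+w. W w * \<psi> (Y w) \<partial>N) = (\<integral>\<^sup>+p. W (fst p) * \<psi> (snd p) \<partial>(Nr \<Otimes>\<^sub>M \<nu>))"
    using Y_Nr prod by (subst joint[symmetric]) (simp add: nn_integral_distr)
  also have "\<dots> = (\<integral>\<^sup>+x. \<integral>\<^sup>+y. W x * \<psi> y \<partial>\<nu> \<partial>Nr)"
    using prod by (subst \<nu>.nn_integral_fst[symmetric]) auto
  also have "\<dots> = (\<integral>\<^sup>+x. W x \<partial>Nr) * (\<integral>\<^sup>+y. \<psi> y \<partial>\<nu>)"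
    using W_Nr \<psi> by (simp add: nn_integral_cmult nn_integral_multc)
  also have "(\<integral>\<^sup>+x. W x \<partial>Nr) = (\<integral>\<^sup>+x. W x \<partial>N)"
    unfolding Nr_def using sub W by (rule nn_integral_subalgebra2)
  finally show ?thesis .
qed

lemma nn_integral_fresh_sample:
  fixes M G :: "'w measure" and \<nu> :: "'b measure"
  assumes M: "finite_measure M" and sub: "subalgebra M G" and C: "C \<in> sets G"
    and \<nu>: "finite_measure \<nu>" and Y: "Y \<in> measurable M \<nu>"
    and law: "\<And>B S. B \<in> sets G \<Longrightarrow> S \<in> sets \<nu> \<Longrightarrow>
      measure M (B \<inter> C \<inter> (Y -` S \<inter> space M)) = measure M (B \<inter> C) * measure \<nu> S"
    and W: "W \<in> borel_measurable G" and \<psi>: "\<psi> \<in> borel_measurable \<nu>"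
  shows "(\<integral>\<^sup>+w. W w * indicator C w * \<psi> (Y w) \<partial>M)
    = (\<integral>\<^sup>+w. W w * indicator C w \<partial>M) * (\<integral>\<^sup>+y. \<psi> y \<partial>\<nu>)"
proof -
  interpret M: finite_measure M by fact
  interpret \<nu>: finite_measure \<nu> by fact
  define N where "N = density M (indicator C)"
  have sets_G: "sets G \<subseteq> sets M" and space_G: "space G = space M"
    using sub by (auto simp: subalgebra_def)
  have C_M: "C \<in> sets M" using C sets_G by auto
  have sets_N: "sets N = sets M" and space_N: "space N = space M"
    by (simp_all add: N_def)
  have emeasure_N: "emeasure N X = emeasure M (C \<inter> X)" if "X \<in> sets M" for X
    unfolding N_def using that C_M
    by (subst emeasure_density) (auto simp: indicator_inter_arith[symmetric] intro!: nn_integral_indicator)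
  have W_M: "W \<in> borel_measurable M" and Y_N: "Y \<in> measurable N \<nu>"
    using measurable_from_subalg[OF sub W] Y by (simp_all add: N_def)
  have "(\<integral>\<^sup>+w. W w * \<psi> (Y w) \<partial>N) = (\<integral>\<^sup>+w. W w \<partial>N) * (\<integral>\<^sup>+y. \<psi> y \<partial>\<nu>)"
  proof (rule nn_integral_mult_independent_of_subalgebra[OF _ _ \<nu> Y_N _ W \<psi>])
    show "finite_measure N"
      by (rule finite_measureI) (simp add: space_N emeasure_N C_M)
    show "subalgebra N G"
      using sub by (simp add: subalgebra_def sets_N space_N)
    fix B S assume B: "B \<in> sets G" and S: "S \<in> sets \<nu>"
    have "Y -` S \<inter> space M \<in> sets M" using Y S by (simp add: measurable_sets)
    then show "emeasure N (B \<inter> (Y -` S \<inter> space N)) = emeasure N B * emeasure \<nu> S"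
      using B S sets_G law[OF B S]
      by (auto simp: space_N emeasure_N M.emeasure_eq_measure \<nu>.emeasure_eq_measure ennreal_mult Int_ac)
  qed
  moreover have "(\<integral>\<^sup>+w. f w \<partial>N) = (\<integral>\<^sup>+w. f w * indicator C w \<partial>M)" if "f \<in> borel_measurable M" for f
    unfolding N_def using that C_M by (subst nn_integral_density) (auto simp: mult.commute)
  moreover have "(\<lambda>w. \<psi> (Y w)) \<in> borel_measurable M"
    using Y \<psi> by measurable
  ultimately show ?thesis
    using W_M by (simp add: mult_ac)
qed

lemma powr_minus_le_diff_powr:
  fixes x \<alpha> :: real
  assumes \<alpha>: "\<alpha> > 1" and x: "x > 1"
  shows "x powr (- \<alpha>) \<le> ((x - 1) powr (1 - \<alpha>) - x powr (1 - \<alpha>)) / (\<alpha> - 1)"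
proof -
  have "\<exists>z. x - 1 < z \<and> z < x \<and>
      x powr (1 - \<alpha>) - (x - 1) powr (1 - \<alpha>) = (x - (x - 1)) * ((1 - \<alpha>) * z powr (1 - \<alpha> - 1))"
  proof (rule MVT2)
    fix y assume "x - 1 \<le> y" "y \<le> x"
    then show "((\<lambda>u. u powr (1 - \<alpha>)) has_real_derivative (1 - \<alpha>) * y powr (1 - \<alpha> - 1)) (at y)"
      using x by (intro has_real_derivative_powr) auto
  qed simp
  then obtain z where z: "x - 1 < z" "z < x"
    and mvt: "x powr (1 - \<alpha>) - (x - 1) powr (1 - \<alpha>) = (1 - \<alpha>) * z powr (- \<alpha>)"
    by auto
  have "x powr (- \<alpha>) \<le> z powr (- \<alpha>)" using z x \<alpha> by (intro powr_mono2') auto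
  then have "(\<alpha> - 1) * x powr (- \<alpha>) \<le> (\<alpha> - 1) * z powr (- \<alpha>)"
    using \<alpha> by simp
  also have "\<dots> = (x - 1) powr (1 - \<alpha>) - x powr (1 - \<alpha>)"
    using mvt by (simp add: algebra_simps)
  finally show ?thesis using \<alpha> by (simp add: field_simps)
qed

lemma sum_powr_minus_le:
  fixes \<alpha> :: real
  assumes \<alpha>: "\<alpha> > 1"
  shows "(\<Sum>n\<in>{1..T}. real n powr (- \<alpha>)) \<le> (\<alpha> - real T powr (1 - \<alpha>)) / (\<alpha> - 1)"
proof (induction T)
  case 0
  show ?case using \<alpha> by simp
next
  case (Suc T)
  show ?case
  proof (cases "T = 0")
    case True
    then show ?thesis using \<alpha> by simp
  next
    case False
    have step: "real (Suc T) powr (- \<alpha>) \<le> (real T powr (1 - \<alpha>) - real (Suc T) powr (1 - \<alpha>)) / (\<alpha> - 1)"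
      using powr_minus_le_diff_powr[OF \<alpha>, of "real (Suc T)"] False by simp
    have "(\<Sum>n\<in>{1..Suc T}. real n powr (- \<alpha>)) = (\<Sum>n\<in>{1..T}. real n powr (- \<alpha>)) + real (Suc T) powr (- \<alpha>)"
      by simp
    also have "\<dots> \<le> (\<alpha> - real T powr (1 - \<alpha>)) / (\<alpha> - 1)
        + (real T powr (1 - \<alpha>) - real (Suc T) powr (1 - \<alpha>)) / (\<alpha> - 1)"
      using Suc.IH step by (rule add_mono)
    also have "\<dots> = (\<alpha> - real (Suc T) powr (1 - \<alpha>)) / (\<alpha> - 1)"
      unfolding add_divide_distrib[symmetric] by simp
    finally show ?thesis .
  qed
qed

lemma sum_max_1_powr_minus_le:
  fixes \<alpha> k \<delta> :: real
  assumes \<alpha>: "\<alpha> > 1" and k: "\<alpha> / (\<alpha> - 1) \<le> k" and \<delta>: "0 \<le> \<delta>"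
  shows "3 * (\<delta> / (4 * k)) * (\<Sum>n\<in>{1..T}. real (max n 1) powr (- \<alpha>)) \<le> \<delta>"
proof -
  have "0 < \<alpha> / (\<alpha> - 1)" using \<alpha> by simp
  then have k_pos: "0 < k" using k by linarith
  have "(\<Sum>n\<in>{1..T}. real (max n 1) powr (- \<alpha>)) = (\<Sum>n\<in>{1..T}. real n powr (- \<alpha>))"
    by (intro sum.cong) auto
  also have "\<dots> \<le> (\<alpha> - real T powr (1 - \<alpha>)) / (\<alpha> - 1)"
    using \<alpha> by (rule sum_powr_minus_le)
  also have "\<dots> \<le> \<alpha> / (\<alpha> - 1)"
    using \<alpha> by (intro divide_right_mono) auto
  finally have "3 * (\<delta> / (4 * k)) * (\<Sum>n\<in>{1..T}. real (max n 1) powr (- \<alpha>)) \<le> 3 * (\<delta> / (4 * k)) * k"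
    using k k_pos \<delta> by (intro mult_left_mono) auto
  also have "\<dots> \<le> \<delta>"
    using k_pos \<delta> by simp
  finally show ?thesis .
qed

lemma sum_max_powr_minus_le:
  fixes \<alpha> :: real
  assumes "\<alpha> \<ge> 0" and "t0 \<ge> 1"
  shows "(\<Sum>n\<in>{1..T}. real (max n t0) powr (- \<alpha>)) \<le> real T * real t0 powr (- \<alpha>)"
proof -
  have "(\<Sum>n\<in>{1..T}. real (max n t0) powr (- \<alpha>)) \<le> (\<Sum>n\<in>{1..T}. real t0 powr (- \<alpha>))"
    using assms by (intro sum_mono powr_mono2') auto
  then show ?thesis by simp
qed

lemma mult_powr_ceiling_half_le:
  fixes \<alpha> :: real
  assumes "\<alpha> \<ge> 0" and "T \<ge> 1"
  shows "real T * real (nat \<lceil>real T / 2\<rceil>) powr (- \<alpha>) \<le> 2 * (real T / 2) powr (1 - \<alpha>)"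
proof -
  have "real (nat \<lceil>real T / 2\<rceil>) powr (- \<alpha>) \<le> (real T / 2) powr (- \<alpha>)"
    using assms by (intro powr_mono2') linarith+
  then have "real T * real (nat \<lceil>real T / 2\<rceil>) powr (- \<alpha>) \<le> 2 * ((real T / 2) * (real T / 2) powr (- \<alpha>))"
    by (simp add: mult_left_mono)
  also have "(real T / 2) * (real T / 2) powr (- \<alpha>) = (real T / 2) powr (1 - \<alpha>)"
    using assms by (simp add: powr_diff powr_minus_divide)
  finally show ?thesis .
qed

lemma half_window_sum_le:
  fixes \<alpha> c a b :: real
  assumes \<alpha>: "\<alpha> > 1" and T: "T \<ge> 1" and c: "c \<ge> 0" and ab: "4 \<le> a + b"
  shows "3 * c * (\<Sum>n\<in>{1..T}. real (max n (nat \<lceil>real T / 2\<rceil>)) powr (- \<alpha>))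
    \<le> c * (real T / 2) powr (1 - \<alpha>) * (ln (real T) + 1) * a
      + c * (real T / 2) powr (1 - \<alpha>) * (ln (real T) + 1) * b"
proof -
  define p where "p = (real T / 2) powr (1 - \<alpha>)"
  define S where "S = (\<Sum>n\<in>{1..T}. real (max n (nat \<lceil>real T / 2\<rceil>)) powr (- \<alpha>))"
  have "3 * S \<le> p * (ln (real T) + 1) * (a + b)"
  proof (cases "T = 1")
    case True
    have "1 \<le> (2::real) powr (\<alpha> - 1)" using \<alpha> by (intro ge_one_powr_ge_zero) auto
    also have "\<dots> = (1 / 2) powr (1 - \<alpha>)" by (simp add: powr_divide powr_minus_divide[symmetric])
    finally have "1 * 4 \<le> (1 / 2 :: real) powr (1 - \<alpha>) * (a + b)" using ab by (intro mult_mono) auto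
    then show ?thesis using True by (simp add: p_def S_def)
  next
    case False
    have "ln 2 \<le> ln (real T)" using T False by simp
    then have "5 / 3 * 4 \<le> (ln (real T) + 1) * (a + b)"
      using ln2_ge_two_thirds ab by (intro mult_mono) auto
    then have "p * 6 \<le> p * ((ln (real T) + 1) * (a + b))"
      by (intro mult_left_mono) (auto simp: p_def)
    moreover have "S \<le> 2 * p"
      using sum_max_powr_minus_le[of \<alpha> "nat \<lceil>real T / 2\<rceil>" T] mult_powr_ceiling_half_le[of \<alpha> T] \<alpha> T
      unfolding p_def S_def by linarith
    ultimately show ?thesis by (simp add: mult.assoc)
  qed
  then have "c * (3 * S) \<le> c * (p * (ln (real T) + 1) * (a + b))"
    using c by (rule mult_left_mono)
  then show ?thesis
    unfolding p_def[symmetric] S_def[symmetric] by (simp add: algebra_simps)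
qed

lemma four_le_ln_80: "4 \<le> ln (80::real)"
proof -
  have "4 \<le> 6 * ln (2::real)" using ln2_ge_two_thirds by simp
  also have "\<dots> = ln (2 ^ 6)" by (subst ln_realpow) simp_all
  also have "\<dots> \<le> ln 80" by simp
  finally show ?thesis .
qed

text \<open>With \<open>c = d\<close> and \<open>c = 5\<^sup>d\<close>, \<open>ln (4 k1 K c t\<^sup>\<alpha> / \<delta>)\<close> is \<open>f\<close> and \<open>g / 4\<close> of the theorem.\<close>

lemma ln_radius_mono:
  fixes k1 K c \<alpha> \<delta> s t :: real
  assumes "0 < k1" "0 < K" "0 < c" "0 \<le> \<alpha>" "0 < s" "s \<le> t" "0 < \<delta>"
  shows "ln (4 * k1 * K * c * s powr \<alpha> / \<delta>) \<le> ln (4 * k1 * K * c * t powr \<alpha> / \<delta>)"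
  using assms by (simp add: powr_mono2 divide_right_mono)

lemma ln_radius_ge:
  fixes k1 K c \<alpha> \<delta> t :: real
  assumes "1 \<le> k1" "1 \<le> K" "0 < c" "0 \<le> \<alpha>" "1 \<le> t" "0 < \<delta>" "\<delta> \<le> 1"
  shows "ln (4 * c) \<le> ln (4 * k1 * K * c * t powr \<alpha> / \<delta>)"
proof -
  have "1 \<le> t powr \<alpha>" using assms by (intro ge_one_powr_ge_zero) auto
  then have "1 * 1 * 1 \<le> k1 * K * t powr \<alpha>" using assms by (intro mult_mono) auto
  then have "4 * c * 1 \<le> 4 * c * (k1 * K * t powr \<alpha>)"
    using assms by (intro mult_left_mono) auto
  also have "\<dots> \<le> 4 * k1 * K * c * t powr \<alpha> / \<delta>"
    using assms by (simp add: le_divide_eq mult_left_le_one_le mult_ac)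
  finally show ?thesis using assms by simp
qed

lemma exp_minus_ln_radius:
  fixes k1 K c \<alpha> \<delta> t :: real
  assumes "0 < k1" "0 < K" "0 < c" "0 < t" "0 < \<delta>"
  shows "exp (- ln (4 * k1 * K * c * t powr \<alpha> / \<delta>)) = \<delta> / (4 * k1 * K * c) * t powr (- \<alpha>)"
  using assms by (simp add: exp_minus powr_minus field_simps)

lemma four_le_ln_radii_sum:
  fixes k1 K \<alpha> \<delta> t :: real and d :: nat
  assumes "1 \<le> k1" "1 \<le> K" "1 \<le> d" "0 \<le> \<alpha>" "1 \<le> t" "0 < \<delta>" "\<delta> \<le> 1"
  shows "4 \<le> ln (4 * k1 * K * d * t powr \<alpha> / \<delta>) + ln (4 * k1 * K * d * t powr \<alpha> / (\<delta> * d / 5 ^ d))"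
proof -
  have "(5::real) ^ 1 \<le> 5 ^ d" using assms(3) by (intro power_increasing) auto
  then have "ln (4 * 5) \<le> ln (4 * (5::real) ^ d)" by simp
  also have "\<dots> \<le> ln (4 * k1 * K * 5 ^ d * t powr \<alpha> / \<delta>)"
    using assms by (intro ln_radius_ge) auto
  also have "4 * k1 * K * 5 ^ d * t powr \<alpha> / \<delta> = 4 * k1 * K * d * t powr \<alpha> / (\<delta> * d / 5 ^ d)"
    using assms(3) by (simp add: field_simps)
  finally have "ln 20 \<le> ln (4 * k1 * K * d * t powr \<alpha> / (\<delta> * d / 5 ^ d))" by simp
  moreover have "ln 4 \<le> ln (4 * real d)" using assms(3) by simp
  moreover have "ln (4 * real d) \<le> ln (4 * k1 * K * d * t powr \<alpha> / \<delta>)"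
    using assms by (intro ln_radius_ge) auto
  moreover have "ln 4 + ln 20 = ln (80::real)" using ln_mult_pos[of 4 20] by simp
  ultimately show ?thesis using four_le_ln_80 by linarith
qed

lemma sqrt_mult_divide_self:
  assumes "n > 0"
  shows "sqrt (x * real n) / n = sqrt (x / n)"
proof -
  have "x / n = x * n / n\<^sup>2" using assms by (simp add: power2_eq_square)
  then show ?thesis using assms by (simp add: real_sqrt_divide)
qed

section \<open>Stopped deviation sums\<close>

lemma real_pulls_eq_sum: "real (pulls A t i w) = (\<Sum>s\<in>{1..t}. if A s w = i then 1 else 0)"
  unfolding pulls_def by (simp add: sum.inter_filter[symmetric])

lemma pulls_0 [simp]: "pulls A 0 i w = 0"
  by (simp add: pulls_def)

lemma pulls_Suc: "pulls A (Suc t) i w = pulls A t i w + (if A (Suc t) w = i then 1 else 0)"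
proof -
  have "real (pulls A (Suc t) i w) = real (pulls A t i w) + (if A (Suc t) w = i then 1 else 0)"
    by (simp add: real_pulls_eq_sum)
  then show ?thesis by (simp split: if_splits)
qed

lemma pulls_le: "pulls A t i w \<le> t"
proof -
  have "pulls A t i w \<le> card {1..t}" unfolding pulls_def by (rule card_mono) auto
  then show ?thesis by simp
qed

lemma pulls_mono: "s \<le> t \<Longrightarrow> pulls A s i w \<le> pulls A t i w"
  unfolding pulls_def by (rule card_mono) auto

definition among_first_pulls :: "(nat \<Rightarrow> 'w \<Rightarrow> nat) \<Rightarrow> nat \<Rightarrow> nat \<Rightarrow> nat \<Rightarrow> 'w \<Rightarrow> bool" where
  "among_first_pulls A i n s w \<longleftrightarrow> A s w = i \<and> pulls A (s - 1) i w < n"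

text \<open>Unlike the sum over all pulls of arm \<open>i\<close>, this sum has at most \<open>n\<close> terms whatever the
  random number of pulls, which is what makes a Chernoff bound with a deterministic \<open>n\<close> possible.\<close>

definition first_pulls_dev ::
  "(nat \<Rightarrow> 'w \<Rightarrow> nat) \<Rightarrow> (nat \<Rightarrow> 'w \<Rightarrow> 'b::real_vector) \<Rightarrow> 'b \<Rightarrow> nat \<Rightarrow> nat \<Rightarrow> nat \<Rightarrow> 'w \<Rightarrow> 'b" where
  "first_pulls_dev A Y \<mu> i n h w = (\<Sum>s\<in>{1..h}. if among_first_pulls A i n s w then Y s w - \<mu> else 0)"

lemma first_pulls_dev_0 [simp]: "first_pulls_dev A Y \<mu> i n 0 w = 0"
  by (simp add: first_pulls_dev_def)

lemma first_pulls_dev_Suc: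
  "first_pulls_dev A Y \<mu> i n (Suc h) w
    = first_pulls_dev A Y \<mu> i n h w + (if among_first_pulls A i n (Suc h) w then Y (Suc h) w - \<mu> else 0)"
  by (simp add: first_pulls_dev_def)

lemma min_pulls_Suc:
  "min (pulls A (Suc h) i w) n
    = min (pulls A h i w) n + (if among_first_pulls A i n (Suc h) w then 1 else 0)"
  by (auto simp: pulls_Suc among_first_pulls_def)

lemma among_first_pulls_set_eq:
  assumes "t \<le> h" and "pulls A t i w = n"
  shows "{s \<in> {1..h}. among_first_pulls A i n s w} = {s \<in> {1..t}. A s w = i}"
proof (intro set_eqI iffI)
  fix s assume "s \<in> {s \<in> {1..h}. among_first_pulls A i n s w}"
  then have s: "1 \<le> s" "A s w = i" "pulls A (s - 1) i w < n"
    by (auto simp: among_first_pulls_def)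
  have "s \<le> t"
  proof (rule ccontr)
    assume "\<not> s \<le> t"
    then have "pulls A t i w \<le> pulls A (s - 1) i w" by (intro pulls_mono) auto
    then show False using s assms by simp
  qed
  then show "s \<in> {s \<in> {1..t}. A s w = i}" using s by auto
next
  fix s assume "s \<in> {s \<in> {1..t}. A s w = i}"
  then obtain r where s: "s = Suc r" "Suc r \<le> t" "A s w = i" by (cases s) auto
  then have "pulls A (s - 1) i w < pulls A t i w"
    using pulls_mono[of s t A i w] by (simp add: pulls_Suc)
  then show "s \<in> {s \<in> {1..h}. among_first_pulls A i n s w}"
    using s assms by (auto simp: among_first_pulls_def)
qed

lemma emp_mean_minus_eq_first_pulls_dev:
  assumes "t \<le> h" and "pulls A t i w = n" and "n > 0"
  shows "emp_mean A Y t i w - \<mu> = (1 / real n) *\<^sub>R first_pulls_dev A Y \<mu> i n h w"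
proof -
  let ?P = "{s \<in> {1..t}. A s w = i}"
  have card: "card ?P = n" using assms(2) by (simp add: pulls_def)
  have "first_pulls_dev A Y \<mu> i n h w = (\<Sum>s\<in>{s \<in> {1..h}. among_first_pulls A i n s w}. Y s w - \<mu>)"
    unfolding first_pulls_dev_def by (rule sum.inter_filter[symmetric]) simp
  also have "\<dots> = (\<Sum>s\<in>?P. Y s w) - (\<Sum>s\<in>?P. \<mu>)"
    by (simp only: among_first_pulls_set_eq[OF assms(1,2)] sum_subtractf)
  also have "(\<Sum>s\<in>?P. \<mu>) = real n *\<^sub>R \<mu>"
    by (simp only: sum_constant_scaleR card)
  finally show ?thesis
    using assms(3) by (simp add: emp_mean_def assms(2) scaleR_diff_right)
qed

lemma good_event_if_first_pulls_dev_le: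
  fixes Y :: "nat \<Rightarrow> 'w \<Rightarrow> real ^ 'd"
  assumes "t \<le> h"
    and small: "\<And>i n. i < K \<Longrightarrow> 0 < n \<Longrightarrow> pulls A t i w = n \<Longrightarrow>
      (\<forall>c. \<bar>first_pulls_dev A Y (\<mu> i) i n h w $ c\<bar> \<le> sqrt (2 * \<sigma>\<^sup>2 * fr t * real n))
      \<and> norm (first_pulls_dev A Y (\<mu> i) i n h w) \<le> sqrt (2 * \<sigma>u\<^sup>2 * gr t * real n)"
  shows "good_event K \<mu> \<sigma> \<sigma>u fr gr A Y t w"
  unfolding good_event_def
proof (intro allI impI)
  fix i assume i: "i < K" and pos: "0 < pulls A t i w"
  define n where "n = pulls A t i w"
  define S where "S = first_pulls_dev A Y (\<mu> i) i n h w"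
  have n: "real n > 0" using pos by (simp add: n_def)
  have dev: "emp_mean A Y t i w - \<mu> i = (1 / real n) *\<^sub>R S"
    unfolding S_def n_def using assms(1) pos by (intro emp_mean_minus_eq_first_pulls_dev) auto
  have "\<bar>emp_mean A Y t i w $ c - \<mu> i $ c\<bar> \<le> sqrt (2 * \<sigma>\<^sup>2 * fr t / real n)" for c
  proof -
    have "\<bar>emp_mean A Y t i w $ c - \<mu> i $ c\<bar> = \<bar>S $ c\<bar> / real n"
      using dev n by (simp flip: vector_minus_component add: abs_mult)
    also have "\<dots> \<le> sqrt (2 * \<sigma>\<^sup>2 * fr t * real n) / real n"
      using small[OF i pos[folded n_def] n_def[symmetric]] n by (intro divide_right_mono) (auto simp: S_def)
    finally show ?thesis using n by (simp add: sqrt_mult_divide_self)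
  qed
  moreover have "norm (emp_mean A Y t i w - \<mu> i) \<le> sqrt (2 * \<sigma>u\<^sup>2 * gr t / real n)"
  proof -
    have "norm (emp_mean A Y t i w - \<mu> i) = norm S / real n"
      using dev n by simp
    also have "\<dots> \<le> sqrt (2 * \<sigma>u\<^sup>2 * gr t * real n) / real n"
      using small[OF i pos[folded n_def] n_def[symmetric]] n by (intro divide_right_mono) (auto simp: S_def)
    finally show ?thesis using n by (simp add: sqrt_mult_divide_self)
  qed
  ultimately show "(\<forall>c. \<bar>emp_mean A Y t i w $ c - \<mu> i $ c\<bar> \<le> sqrt (2 * \<sigma>\<^sup>2 * fr t / real (pulls A t i w)))
      \<and> norm (emp_mean A Y t i w - \<mu> i) \<le> sqrt (2 * \<sigma>u\<^sup>2 * gr t / real (pulls A t i w))"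
    by (simp add: n_def)
qed

section \<open>The bandit model\<close>

locale bandit = prob_space M
  for M :: "'w measure" +
  fixes F :: "nat \<Rightarrow> 'w measure"
    and A :: "nat \<Rightarrow> 'w \<Rightarrow> nat" and Y :: "nat \<Rightarrow> 'w \<Rightarrow> real ^ 'd"
    and \<nu> :: "nat \<Rightarrow> (real ^ 'd) measure" and K :: nat
  assumes nu_prob: "\<And>i. i < K \<Longrightarrow> prob_space (\<nu> i)"
    and nu_sets: "\<And>i. i < K \<Longrightarrow> sets (\<nu> i) = sets borel"
    and filt_sub: "\<And>t. subalgebra M (F t)"
    and filt_mono: "\<And>s t. s \<le> t \<Longrightarrow> sets (F s) \<subseteq> sets (F t)"
    and A_meas: "\<And>t. t \<ge> 1 \<Longrightarrow> A t \<in> measurable (F (t - 1)) (count_space UNIV)"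
    and Y_meas: "\<And>t. t \<ge> 1 \<Longrightarrow> Y t \<in> borel_measurable (F t)"
    and Y_law: "\<And>t i B S. t \<ge> 1 \<Longrightarrow> i < K \<Longrightarrow> B \<in> sets (F (t - 1)) \<Longrightarrow> S \<in> sets borel \<Longrightarrow>
        measure M (B \<inter> {w \<in> space M. A t w = i} \<inter> (Y t -` S \<inter> space M))
          = measure M (B \<inter> {w \<in> space M. A t w = i}) * measure (\<nu> i) S"
begin

lemma space_F: "space (F t) = space M"
  using filt_sub[of t] by (simp add: subalgebra_def)

lemma sets_F_subset: "sets (F t) \<subseteq> sets M"
  using filt_sub[of t] by (simp add: subalgebra_def)

lemma measurable_F_mono: "s \<le> t \<Longrightarrow> f \<in> measurable (F s) N \<Longrightarrow> f \<in> measurable (F t) N"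
  using filt_mono[of s t] by (auto simp: measurable_def space_F)

lemma measurable_F_imp_M: "f \<in> measurable (F t) N \<Longrightarrow> f \<in> measurable M N"
  by (rule measurable_from_subalg[OF filt_sub])

lemma sets_F_arm: "1 \<le> s \<Longrightarrow> s \<le> Suc h \<Longrightarrow> {w \<in> space M. A s w = i} \<in> sets (F h)"
  using measurable_F_mono[OF _ A_meas, of s h] measurable_sets[of "A s" "F h" "count_space UNIV" "{i}"]
  by (simp add: space_F vimage_def Int_def conj_commute)

lemma pulls_measurable_F: "t \<le> Suc h \<Longrightarrow> (\<lambda>w. real (pulls A t i w)) \<in> borel_measurable (F h)"
  unfolding real_pulls_eq_sum
proof (intro borel_measurable_sum)
  fix s assume "t \<le> Suc h" "s \<in> {1..t}"
  then have "{w \<in> space (F h). A s w = i} \<in> sets (F h)" by (simp add: space_F sets_F_arm)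
  then show "(\<lambda>w. if A s w = i then 1 else 0 :: real) \<in> borel_measurable (F h)"
    by (simp add: measurable_If_set)
qed

lemma sets_F_among_first_pulls:
  assumes "1 \<le> s" "s \<le> Suc h"
  shows "{w \<in> space M. among_first_pulls A i n s w} \<in> sets (F h)"
proof -
  have "{w \<in> space M. among_first_pulls A i n s w}
      = {w \<in> space M. A s w = i} \<inter> {w \<in> space (F h). real (pulls A (s - 1) i w) < real n}"
    by (auto simp: among_first_pulls_def space_F)
  also have "\<dots> \<in> sets (F h)"
  proof (rule sets.Int)
    show "{w \<in> space M. A s w = i} \<in> sets (F h)" using assms by (rule sets_F_arm)
    have [measurable]: "(\<lambda>w. real (pulls A (s - 1) i w)) \<in> borel_measurable (F h)"
      using assms by (intro pulls_measurable_F) auto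
    show "{w \<in> space (F h). real (pulls A (s - 1) i w) < real n} \<in> sets (F h)"
      by measurable
  qed
  finally show ?thesis .
qed

lemma first_pulls_dev_measurable_F: "first_pulls_dev A Y \<mu> i n h \<in> borel_measurable (F h)"
  unfolding first_pulls_dev_def
proof (intro borel_measurable_sum)
  fix s assume "s \<in> {1..h}"
  then have "{w \<in> space (F h). among_first_pulls A i n s w} \<in> sets (F h)"
    and "Y s \<in> borel_measurable (F h)"
    using sets_F_among_first_pulls[of s h] measurable_F_mono[OF _ Y_meas, of s h] by (auto simp: space_F)
  then show "(\<lambda>w. if among_first_pulls A i n s w then Y s w - \<mu> else 0) \<in> borel_measurable (F h)"
    by (intro measurable_If borel_measurable_diff) auto
qed

lemma first_pulls_dev_measurable [measurable]:
  "first_pulls_dev A Y \<mu> i n h \<in> borel_measurable M"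
  by (rule measurable_F_imp_M[OF first_pulls_dev_measurable_F])

lemma pulls_measurable [measurable]: "pulls A t i \<in> measurable M (count_space UNIV)"
proof -
  have [measurable]: "(\<lambda>w. real (pulls A t i w)) \<in> borel_measurable M"
    by (rule measurable_F_imp_M, rule pulls_measurable_F[of t t]) simp
  have "pulls A t i -` {m} \<inter> space M \<in> sets M" for m
  proof -
    have "pulls A t i -` {m} \<inter> space M = {w \<in> space M. real (pulls A t i w) = real m}"
      by auto
    also have "\<dots> \<in> sets M" by measurable
    finally show ?thesis .
  qed
  then show ?thesis
    by (simp add: measurable_count_space_eq2_countable)
qed

lemma emp_mean_measurable [measurable]: "emp_mean A Y t i \<in> borel_measurable M"
proof -
  have [measurable]: "(\<lambda>w. \<Sum>s\<in>{1..t}. if A s w = i then Y s w else 0) \<in> borel_measurable M"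
  proof (rule borel_measurable_sum)
    fix s assume "s \<in> {1..t}"
    then have "{w \<in> space M. A s w = i} \<in> sets M" and "Y s \<in> borel_measurable M"
      using sets_F_arm[of s t i] sets_F_subset measurable_F_imp_M[OF Y_meas, of s] by auto
    then show "(\<lambda>w. if A s w = i then Y s w else 0) \<in> borel_measurable M"
      by (intro measurable_If) auto
  qed
  have eq: "emp_mean A Y t i
      = (\<lambda>w. (1 / real (pulls A t i w)) *\<^sub>R (\<Sum>s\<in>{1..t}. if A s w = i then Y s w else 0))"
    by (intro ext) (simp only: emp_mean_def sum.inter_filter[OF finite_atLeastAtMost])
  show ?thesis unfolding eq by measurable
qed

lemma emp_mean_component_measurable [measurable]:
  "(\<lambda>w. emp_mean A Y t i w $ c) \<in> borel_measurable M"
proof -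
  have "(\<lambda>w. emp_mean A Y t i w \<bullet> axis c 1) \<in> borel_measurable M" by measurable
  then show ?thesis by (simp add: inner_axis)
qed

lemma good_event_measurable [measurable]:
  "Measurable.pred M (\<lambda>w. good_event K \<mu> \<sigma> \<sigma>u fr gr A Y t w)"
  unfolding good_event_def by measurable

lemma nn_integral_fresh_sample_first_pulls:
  assumes i: "i < K" and W: "W \<in> borel_measurable (F h)" and \<psi>: "\<psi> \<in> borel_measurable borel"
  shows "(\<integral>\<^sup>+w. W w * indicator {w \<in> space M. among_first_pulls A i n (Suc h) w} w * \<psi> (Y (Suc h) w) \<partial>M)
    = (\<integral>\<^sup>+w. W w * indicator {w \<in> space M. among_first_pulls A i n (Suc h) w} w \<partial>M)
      * (\<integral>\<^sup>+y. \<psi> y \<partial>\<nu> i)"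
    (is "_ = (\<integral>\<^sup>+w. W w * indicator ?C w \<partial>M) * _")
proof (rule nn_integral_fresh_sample[OF _ filt_sub])
  define P where "P = {w \<in> space M. real (pulls A h i w) < real n}"
  have [measurable]: "(\<lambda>w. real (pulls A h i w)) \<in> borel_measurable (F h)"
    by (rule pulls_measurable_F) simp
  have P: "P \<in> sets (F h)"
    unfolding P_def space_F[of h, symmetric] by measurable
  have C: "?C = P \<inter> {w \<in> space M. A (Suc h) w = i}"
    by (auto simp: P_def among_first_pulls_def)
  show "?C \<in> sets (F h)" by (rule sets_F_among_first_pulls) auto
  show "finite_measure M" "finite_measure (\<nu> i)"
    using nu_prob[OF i] by (simp_all add: finite_measure_axioms prob_space_def)
  show "Y (Suc h) \<in> measurable M (\<nu> i)"
    using measurable_F_imp_M[OF Y_meas] nu_sets[OF i] by (simp cong: measurable_cong_sets)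
  show "\<psi> \<in> borel_measurable (\<nu> i)"
    using \<psi> nu_sets[OF i] by (simp cong: measurable_cong_sets)
  fix B S assume "B \<in> sets (F h)" "S \<in> sets (\<nu> i)"
  then show "measure M (B \<inter> ?C \<inter> (Y (Suc h) -` S \<inter> space M)) = measure M (B \<inter> ?C) * measure (\<nu> i) S"
    using Y_law[of "Suc h" i "B \<inter> P" S] i P nu_sets[OF i] by (simp add: C Int_assoc)
qed (rule W)

definition exp_dev_process :: "real \<Rightarrow> real \<Rightarrow> real ^ 'd \<Rightarrow> nat \<Rightarrow> nat \<Rightarrow> nat \<Rightarrow> 'w \<Rightarrow> real" where
  "exp_dev_process \<sigma> l z i n h w = exp (l * (first_pulls_dev A Y (mean_vec (\<nu> i)) i n h w \<bullet> z)
     - l\<^sup>2 * \<sigma>\<^sup>2 / 2 * real (min (pulls A h i w) n))"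

lemma exp_dev_process_0 [simp]: "exp_dev_process \<sigma> l z i n 0 w = 1"
  by (simp add: exp_dev_process_def)

lemma exp_dev_process_Suc:
  "exp_dev_process \<sigma> l z i n (Suc h) w =
    (if among_first_pulls A i n (Suc h) w
     then exp_dev_process \<sigma> l z i n h w * exp (l * ((Y (Suc h) w - mean_vec (\<nu> i)) \<bullet> z) - l\<^sup>2 * \<sigma>\<^sup>2 / 2)
     else exp_dev_process \<sigma> l z i n h w)"
  by (simp add: exp_dev_process_def first_pulls_dev_Suc min_pulls_Suc algebra_simps flip: exp_add)

lemma exp_dev_process_measurable_F: "exp_dev_process \<sigma> l z i n h \<in> borel_measurable (F h)"
proof -
  have [measurable]: "first_pulls_dev A Y (mean_vec (\<nu> i)) i n h \<in> borel_measurable (F h)"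
    "(\<lambda>w. real (pulls A h i w)) \<in> borel_measurable (F h)"
    using first_pulls_dev_measurable_F pulls_measurable_F[of h h] by simp_all
  show ?thesis
    unfolding exp_dev_process_def of_nat_min by measurable
qed

text \<open>The supermartingale property: the factor gained at a pull of arm \<open>i\<close> is a function of a
  sample that is independent of \<open>F h\<close>, with mean at most 1 by sub-Gaussianity.\<close>

lemma nn_integral_exp_dev_process_Suc_le:
  assumes i: "i < K" and sg: "subgaussian (\<nu> i) (\<lambda>x. x \<bullet> z) \<sigma>"
    and int: "\<And>c. integrable (\<nu> i) (\<lambda>x. x $ c)"
  shows "(\<integral>\<^sup>+w. exp_dev_process \<sigma> l z i n (Suc h) w \<partial>M) \<le> (\<integral>\<^sup>+w. exp_dev_process \<sigma> l z i n h w \<partial>M)"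
proof -
  define E where "E = exp_dev_process \<sigma> l z i n h"
  define C where "C = {w \<in> space M. among_first_pulls A i n (Suc h) w}"
  define \<psi> where "\<psi> y = ennreal (exp (l * ((y - mean_vec (\<nu> i)) \<bullet> z) - l\<^sup>2 * \<sigma>\<^sup>2 / 2))" for y
  have E_F: "E \<in> borel_measurable (F h)"
    unfolding E_def by (rule exp_dev_process_measurable_F)
  have [measurable]: "E \<in> borel_measurable M" "C \<in> sets M" "Y (Suc h) \<in> borel_measurable M"
    using measurable_F_imp_M[OF E_F] sets_F_among_first_pulls[of "Suc h" h i n] sets_F_subset
      measurable_F_imp_M[OF Y_meas, of "Suc h"]
    by (auto simp: C_def)
  have [measurable]: "\<psi> \<in> borel_measurable borel"
    unfolding \<psi>_def by measurable
  have "(\<integral>\<^sup>+y. \<psi> y \<partial>\<nu> i) \<le> 1"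
    using subgaussian_nn_integral_exp_le_1[OF sg, of l] mean_vec_inner[OF int, of z]
    by (simp add: \<psi>_def inner_diff_left)
  moreover have "(\<integral>\<^sup>+w. ennreal (E w) * indicator C w * \<psi> (Y (Suc h) w) \<partial>M)
      = (\<integral>\<^sup>+w. ennreal (E w) * indicator C w \<partial>M) * (\<integral>\<^sup>+y. \<psi> y \<partial>\<nu> i)"
    unfolding C_def by (rule nn_integral_fresh_sample_first_pulls[OF i]) (use E_F in \<open>auto simp: \<psi>_def\<close>)
  ultimately have "(\<integral>\<^sup>+w. ennreal (E w) * indicator C w * \<psi> (Y (Suc h) w) \<partial>M)
      \<le> (\<integral>\<^sup>+w. ennreal (E w) * indicator C w \<partial>M)"
    using mult_left_mono[of "(\<integral>\<^sup>+y. \<psi> y \<partial>\<nu> i)" 1 "(\<integral>\<^sup>+w. ennreal (E w) * indicator C w \<partial>M)"]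
    by simp
  then have "(\<integral>\<^sup>+w. ennreal (exp_dev_process \<sigma> l z i n (Suc h) w) \<partial>M)
      \<le> (\<integral>\<^sup>+w. ennreal (E w) * indicator (space M - C) w \<partial>M) + (\<integral>\<^sup>+w. ennreal (E w) * indicator C w \<partial>M)"
  proof -
    have "(\<integral>\<^sup>+w. ennreal (exp_dev_process \<sigma> l z i n (Suc h) w) \<partial>M)
        = (\<integral>\<^sup>+w. ennreal (E w) * indicator (space M - C) w + ennreal (E w) * indicator C w * \<psi> (Y (Suc h) w) \<partial>M)"
      by (intro nn_integral_cong)
        (auto simp: exp_dev_process_Suc E_def C_def \<psi>_def ennreal_mult'' indicator_def)
    also have "\<dots> = (\<integral>\<^sup>+w. ennreal (E w) * indicator (space M - C) w \<partial>M)
        + (\<integral>\<^sup>+w. ennreal (E w) * indicator C w * \<psi> (Y (Suc h) w) \<partial>M)"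
      by (rule nn_integral_add) measurable
    finally show ?thesis using \<open>_ \<le> (\<integral>\<^sup>+w. ennreal (E w) * indicator C w \<partial>M)\<close> by (simp add: add_left_mono)
  qed
  also have "\<dots> = (\<integral>\<^sup>+w. ennreal (E w) * indicator (space M - C) w + ennreal (E w) * indicator C w \<partial>M)"
    by (rule nn_integral_add[symmetric]) measurable
  also have "\<dots> = (\<integral>\<^sup>+w. ennreal (E w) \<partial>M)"
    by (intro nn_integral_cong) (auto simp: indicator_def C_def)
  finally show ?thesis by (simp add: E_def)
qed

lemma nn_integral_exp_dev_process_le_1:
  assumes "i < K" and "subgaussian (\<nu> i) (\<lambda>x. x \<bullet> z) \<sigma>" and "\<And>c. integrable (\<nu> i) (\<lambda>x. x $ c)"
  shows "(\<integral>\<^sup>+w. exp_dev_process \<sigma> l z i n h w \<partial>M) \<le> 1"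
proof (induction h)
  case 0
  show ?case by (simp add: emeasure_space_1)
next
  case (Suc h)
  with nn_integral_exp_dev_process_Suc_le[OF assms] show ?case by (rule order_trans)
qed

lemma first_pulls_dev_inner_tail:
  assumes i: "i < K" and sg: "subgaussian (\<nu> i) (\<lambda>x. x \<bullet> z) \<sigma>" and \<sigma>: "\<sigma> > 0"
    and int: "\<And>c. integrable (\<nu> i) (\<lambda>x. x $ c)" and n: "n \<ge> 1" and a: "a \<ge> 0"
  shows "measure M {w \<in> space M. a \<le> first_pulls_dev A Y (mean_vec (\<nu> i)) i n h w \<bullet> z}
    \<le> exp (- (a\<^sup>2 / (2 * real n * \<sigma>\<^sup>2)))"
proof -
  define S where "S w = first_pulls_dev A Y (mean_vec (\<nu> i)) i n h w \<bullet> z" for w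
  define l where "l = a / (real n * \<sigma>\<^sup>2)" \<comment> \<open>the minimiser of \<open>l\<^sup>2 \<sigma>\<^sup>2 n / 2 - l a\<close>\<close>
  define E where "E = exp_dev_process \<sigma> l z i n h"
  define b where "b = exp (l\<^sup>2 * \<sigma>\<^sup>2 / 2 * real n - l * a)"
  have l: "l \<ge> 0" unfolding l_def using a n \<sigma> by simp
  have b: "b = exp (- (a\<^sup>2 / (2 * real n * \<sigma>\<^sup>2)))"
    unfolding b_def l_def using n \<sigma> by (simp add: field_simps power2_eq_square)
  have [measurable]: "S \<in> borel_measurable M" "E \<in> borel_measurable M"
    unfolding S_def E_def using measurable_F_imp_M[OF exp_dev_process_measurable_F] by simp_all
  have ind: "indicator {w \<in> space M. a \<le> S w} w \<le> ennreal (E w) * ennreal b" for w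
  proof (cases "w \<in> space M \<and> a \<le> S w")
    case True
    have "l * a \<le> l * S w" using True l by (simp add: mult_left_mono)
    moreover have "l\<^sup>2 * \<sigma>\<^sup>2 / 2 * real (min (pulls A h i w) n) \<le> l\<^sup>2 * \<sigma>\<^sup>2 / 2 * real n"
      by (intro mult_left_mono) auto
    ultimately have "1 \<le> E w * b"
      unfolding E_def exp_dev_process_def b_def S_def by (simp flip: exp_add)
    then show ?thesis using True by (simp add: ennreal_mult'[symmetric] E_def exp_dev_process_def b_def)
  qed auto
  have "emeasure M {w \<in> space M. a \<le> S w} = (\<integral>\<^sup>+w. indicator {w \<in> space M. a \<le> S w} w \<partial>M)"
    by (rule nn_integral_indicator[symmetric]) measurable
  also have "\<dots> \<le> (\<integral>\<^sup>+w. ennreal (E w) * ennreal b \<partial>M)"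
    by (intro nn_integral_mono ind)
  also have "\<dots> = (\<integral>\<^sup>+w. ennreal (E w) \<partial>M) * ennreal b"
    by (intro nn_integral_multc) measurable
  also have "\<dots> \<le> ennreal b"
    using nn_integral_exp_dev_process_le_1[OF i sg int, of l n h] mult_right_mono[of _ 1 "ennreal b"]
    by (simp add: E_def)
  finally show ?thesis
    by (simp add: b S_def emeasure_eq_measure)
qed

definition coord_dev_event :: "nat \<Rightarrow> nat \<Rightarrow> nat \<Rightarrow> real \<Rightarrow> 'w set" where
  "coord_dev_event i n h a =
    {w \<in> space M. \<exists>c. a < \<bar>first_pulls_dev A Y (mean_vec (\<nu> i)) i n h w $ c\<bar>}"

definition norm_dev_event :: "nat \<Rightarrow> nat \<Rightarrow> nat \<Rightarrow> real \<Rightarrow> 'w set" where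
  "norm_dev_event i n h b = {w \<in> space M. b < norm (first_pulls_dev A Y (mean_vec (\<nu> i)) i n h w)}"

lemma sets_coord_dev_event [measurable]: "coord_dev_event i n h a \<in> sets M"
proof -
  have "coord_dev_event i n h a
      = (\<Union>c. {w \<in> space M. a < \<bar>first_pulls_dev A Y (mean_vec (\<nu> i)) i n h w $ c\<bar>})"
    by (auto simp: coord_dev_event_def)
  also have "\<dots> \<in> sets M" by (intro sets.finite_UN) auto
  finally show ?thesis .
qed

lemma sets_norm_dev_event [measurable]: "norm_dev_event i n h b \<in> sets M"
  unfolding norm_dev_event_def by measurable

lemma measure_coord_dev_event_le:
  assumes i: "i < K" and \<sigma>: "\<sigma> > 0" and sg: "\<And>c. subgaussian (\<nu> i) (\<lambda>x. x $ c) \<sigma>"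
    and n: "n \<ge> 1" and a: "a \<ge> 0"
  shows "measure M (coord_dev_event i n h a) \<le> 2 * CARD('d) * exp (- (a\<^sup>2 / (2 * real n * \<sigma>\<^sup>2)))"
proof -
  let ?S = "first_pulls_dev A Y (mean_vec (\<nu> i)) i n h"
  define B where "B z = {w \<in> space M. a \<le> ?S w \<bullet> z}" for z
  have B [measurable]: "B z \<in> sets M" for z unfolding B_def by measurable
  have int: "integrable (\<nu> i) (\<lambda>x. x $ c)" for c
    using sg by (simp add: subgaussian_def)
  have tail: "measure M (B z) \<le> exp (- (a\<^sup>2 / (2 * real n * \<sigma>\<^sup>2)))"
    if "subgaussian (\<nu> i) (\<lambda>x. x \<bullet> z) \<sigma>" for z
    unfolding B_def using i that \<sigma> int n a by (rule first_pulls_dev_inner_tail)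
  have sg_pos: "subgaussian (\<nu> i) (\<lambda>x. x \<bullet> axis c 1) \<sigma>" for c
    using sg[of c] by (simp add: inner_axis)
  have sg_neg: "subgaussian (\<nu> i) (\<lambda>x. x \<bullet> - axis c 1) \<sigma>" for c
    using subgaussian_uminus[OF sg[of c]] by (simp add: inner_axis)
  have "coord_dev_event i n h a \<subseteq> (\<Union>c. B (axis c 1) \<union> B (- axis c 1))"
  proof
    fix w assume "w \<in> coord_dev_event i n h a"
    then obtain c where "w \<in> space M" "a < \<bar>?S w $ c\<bar>" by (auto simp: coord_dev_event_def)
    then have "w \<in> B (axis c 1) \<or> w \<in> B (- axis c 1)"
      by (auto simp: B_def inner_axis abs_real_def split: if_splits)
    then show "w \<in> (\<Union>c. B (axis c 1) \<union> B (- axis c 1))" by blast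
  qed
  then have "measure M (coord_dev_event i n h a) \<le> measure M (\<Union>c. B (axis c 1) \<union> B (- axis c 1))"
    by (intro finite_measure_mono) auto
  also have "\<dots> \<le> (\<Sum>c\<in>UNIV. measure M (B (axis c 1)) + measure M (B (- axis c 1)))"
    by (intro order.trans[OF finite_measure_subadditive_finite] sum_mono measure_Un_le) auto
  also have "\<dots> \<le> (\<Sum>c\<in>(UNIV :: 'd set). 2 * exp (- (a\<^sup>2 / (2 * real n * \<sigma>\<^sup>2))))"
  proof (rule sum_mono)
    fix c :: 'd
    show "measure M (B (axis c 1)) + measure M (B (- axis c 1)) \<le> 2 * exp (- (a\<^sup>2 / (2 * real n * \<sigma>\<^sup>2)))"
      using tail[OF sg_pos[of c]] tail[OF sg_neg[of c]] by linarith
  qed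
  finally show ?thesis by simp
qed

lemma measure_norm_dev_event_le:
  assumes i: "i < K" and \<sigma>: "\<sigma> > 0" and sg: "\<And>z. norm z = 1 \<Longrightarrow> subgaussian (\<nu> i) (\<lambda>x. x \<bullet> z) \<sigma>"
    and n: "n \<ge> 1" and b: "b \<ge> 0"
  shows "measure M (norm_dev_event i n h b) \<le> 5 ^ CARD('d) * exp (- ((b / 2)\<^sup>2 / (2 * real n * \<sigma>\<^sup>2)))"
proof -
  let ?S = "first_pulls_dev A Y (mean_vec (\<nu> i)) i n h"
  obtain Z :: "(real ^ 'd) set" where Z: "finite Z" "card Z \<le> 5 ^ CARD('d)" "\<forall>z\<in>Z. norm z = 1"
    and net: "\<forall>x. \<exists>z\<in>Z. norm x \<le> 2 * (x \<bullet> z)"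
    using exists_unit_net[where 'a = "real ^ 'd"] by auto
  define B where "B z = {w \<in> space M. b / 2 \<le> ?S w \<bullet> z}" for z
  have B [measurable]: "B z \<in> sets M" for z unfolding B_def by measurable
  have int: "integrable (\<nu> i) (\<lambda>x. x $ c)" for c
    using sg by (rule integrable_component_if_subgaussian_inner)
  have "norm_dev_event i n h b \<subseteq> (\<Union>z\<in>Z. B z)"
  proof
    fix w assume w: "w \<in> norm_dev_event i n h b"
    obtain z where "z \<in> Z" "norm (?S w) \<le> 2 * (?S w \<bullet> z)" using net by blast
    then show "w \<in> (\<Union>z\<in>Z. B z)" using w by (force simp: norm_dev_event_def B_def)
  qed
  then have "measure M (norm_dev_event i n h b) \<le> measure M (\<Union>z\<in>Z. B z)"
    using Z(1) by (intro finite_measure_mono) auto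
  also have "\<dots> \<le> (\<Sum>z\<in>Z. measure M (B z))"
    using Z(1) by (intro finite_measure_subadditive_finite) auto
  also have "\<dots> \<le> (\<Sum>z\<in>Z. exp (- ((b / 2)\<^sup>2 / (2 * real n * \<sigma>\<^sup>2))))"
    unfolding B_def using Z(3) b
    by (intro sum_mono first_pulls_dev_inner_tail[OF i sg \<sigma> int n]) auto
  also have "\<dots> = real (card Z) * exp (- ((b / 2)\<^sup>2 / (2 * real n * \<sigma>\<^sup>2)))"
    by simp
  also have "\<dots> \<le> 5 ^ CARD('d) * exp (- ((b / 2)\<^sup>2 / (2 * real n * \<sigma>\<^sup>2)))"
  proof (rule mult_right_mono)
    have "real (card Z) \<le> real (5 ^ CARD('d))" using Z(2) by (simp only: of_nat_le_iff)
    then show "real (card Z) \<le> 5 ^ CARD('d)" by simp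
  qed simp
  finally show ?thesis .
qed

text \<open>If arm \<open>i\<close> has \<open>n\<close> pulls at a failed round \<open>t \<ge> t\<^sub>0\<close>, its first \<open>n\<close> samples deviate beyond
  the radius of round \<open>max n t\<^sub>0 \<le> t\<close>; these events no longer depend on \<open>t\<close>, so a union over
  \<open>i\<close> and \<open>n\<close> covers the whole window.\<close>

lemma not_good_window_subset:
  assumes fr_mono: "\<And>s t. 1 \<le> s \<Longrightarrow> s \<le> t \<Longrightarrow> fr s \<le> fr t"
    and gr_mono: "\<And>s t. 1 \<le> s \<Longrightarrow> s \<le> t \<Longrightarrow> gr s \<le> gr t"
    and t0: "1 \<le> t0"
  shows "{w \<in> space M. \<not> (\<forall>t\<in>{t0..T}. good_event K (\<lambda>i. mean_vec (\<nu> i)) \<sigma> \<sigma>u fr gr A Y t w)}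
    \<subseteq> (\<Union>i<K. \<Union>n\<in>{1..T}. coord_dev_event i n T (sqrt (2 * \<sigma>\<^sup>2 * fr (max n t0) * real n))
        \<union> norm_dev_event i n T (sqrt (2 * \<sigma>u\<^sup>2 * gr (max n t0) * real n)))"
    (is "_ \<subseteq> ?U")
proof
  fix w assume "w \<in> {w \<in> space M. \<not> (\<forall>t\<in>{t0..T}. good_event K (\<lambda>i. mean_vec (\<nu> i)) \<sigma> \<sigma>u fr gr A Y t w)}"
  then obtain t where w: "w \<in> space M" and t: "t0 \<le> t" "t \<le> T"
    and bad: "\<not> good_event K (\<lambda>i. mean_vec (\<nu> i)) \<sigma> \<sigma>u fr gr A Y t w" by auto
  show "w \<in> ?U"
  proof (rule ccontr)
    assume "w \<notin> ?U"
    have "good_event K (\<lambda>i. mean_vec (\<nu> i)) \<sigma> \<sigma>u fr gr A Y t w"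
    proof (rule good_event_if_first_pulls_dev_le[OF t(2)])
      fix i n assume i: "i < K" and pos: "0 < n" and n_def: "pulls A t i w = n"
      have n: "n \<in> {1..T}" "max n t0 \<le> t"
        using pos pulls_le[of A t i w] t by (auto simp: n_def)
      then have "fr (max n t0) \<le> fr t" "gr (max n t0) \<le> gr t"
        using t0 by (auto intro!: fr_mono gr_mono)
      then have "sqrt (2 * \<sigma>\<^sup>2 * fr (max n t0) * real n) \<le> sqrt (2 * \<sigma>\<^sup>2 * fr t * real n)"
        and "sqrt (2 * \<sigma>u\<^sup>2 * gr (max n t0) * real n) \<le> sqrt (2 * \<sigma>u\<^sup>2 * gr t * real n)"
        by (auto intro!: real_sqrt_le_mono mult_right_mono mult_left_mono)
      moreover have "w \<notin> coord_dev_event i n T (sqrt (2 * \<sigma>\<^sup>2 * fr (max n t0) * real n))"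
        and "w \<notin> norm_dev_event i n T (sqrt (2 * \<sigma>u\<^sup>2 * gr (max n t0) * real n))"
        using \<open>w \<notin> ?U\<close> i n(1) by auto
      then have "\<forall>c. \<bar>first_pulls_dev A Y (mean_vec (\<nu> i)) i n T w $ c\<bar> \<le> sqrt (2 * \<sigma>\<^sup>2 * fr (max n t0) * real n)"
        and "norm (first_pulls_dev A Y (mean_vec (\<nu> i)) i n T w) \<le> sqrt (2 * \<sigma>u\<^sup>2 * gr (max n t0) * real n)"
        using w by (auto simp: coord_dev_event_def norm_dev_event_def not_less)
      ultimately show "(\<forall>c. \<bar>first_pulls_dev A Y (mean_vec (\<nu> i)) i n T w $ c\<bar> \<le> sqrt (2 * \<sigma>\<^sup>2 * fr t * real n))
        \<and> norm (first_pulls_dev A Y (mean_vec (\<nu> i)) i n T w) \<le> sqrt (2 * \<sigma>u\<^sup>2 * gr t * real n)"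
        by (blast intro: order_trans)
    qed
    with bad show False ..
  qed
qed

lemma measure_dev_events_le:
  assumes i: "i < K" and \<sigma>: "\<sigma> > 0" "\<sigma>u > 0"
    and marg: "\<And>c. subgaussian (\<nu> i) (\<lambda>x. x $ c) \<sigma>"
    and norm: "\<And>z. norm z = 1 \<Longrightarrow> subgaussian (\<nu> i) (\<lambda>x. x \<bullet> z) \<sigma>u"
    and n: "n \<ge> 1" and x: "x \<ge> 0" and y: "y \<ge> 0"
  shows "measure M (coord_dev_event i n h (sqrt (2 * \<sigma>\<^sup>2 * x * real n)) \<union> norm_dev_event i n h (sqrt (2 * \<sigma>u\<^sup>2 * y * real n)))
    \<le> 2 * CARD('d) * exp (- x) + 5 ^ CARD('d) * exp (- (y / 4))"
proof -
  have "(sqrt (2 * \<sigma>\<^sup>2 * x * real n))\<^sup>2 = 2 * \<sigma>\<^sup>2 * x * real n"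
    and "(sqrt (2 * \<sigma>u\<^sup>2 * y * real n) / 2)\<^sup>2 = 2 * \<sigma>u\<^sup>2 * y * real n / 4"
    using x y by (simp_all add: power_divide)
  then have radius: "(sqrt (2 * \<sigma>\<^sup>2 * x * real n))\<^sup>2 / (2 * real n * \<sigma>\<^sup>2) = x"
    "(sqrt (2 * \<sigma>u\<^sup>2 * y * real n) / 2)\<^sup>2 / (2 * real n * \<sigma>u\<^sup>2) = y / 4"
    using \<sigma> n by (simp_all add: field_simps)
  have "measure M (coord_dev_event i n h (sqrt (2 * \<sigma>\<^sup>2 * x * n)) \<union> norm_dev_event i n h (sqrt (2 * \<sigma>u\<^sup>2 * y * n)))
      \<le> measure M (coord_dev_event i n h (sqrt (2 * \<sigma>\<^sup>2 * x * n)))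
        + measure M (norm_dev_event i n h (sqrt (2 * \<sigma>u\<^sup>2 * y * n)))"
    by (rule measure_Un_le) measurable
  also have "\<dots> \<le> 2 * CARD('d) * exp (- x) + 5 ^ CARD('d) * exp (- (y / 4))"
    using x y
    by (intro add_mono measure_coord_dev_event_le[OF i \<sigma>(1) marg n, where a = "sqrt (2 * \<sigma>\<^sup>2 * x * n)", unfolded radius]
        measure_norm_dev_event_le[OF i \<sigma>(2) norm n, where b = "sqrt (2 * \<sigma>u\<^sup>2 * y * n)", unfolded radius]) simp_all
  finally show ?thesis .
qed

lemma measure_not_good_window_le:
  assumes fr_mono: "\<And>s t. 1 \<le> s \<Longrightarrow> s \<le> t \<Longrightarrow> fr s \<le> fr t"
    and gr_mono: "\<And>s t. 1 \<le> s \<Longrightarrow> s \<le> t \<Longrightarrow> gr s \<le> gr t"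
    and fr_nonneg: "\<And>t. 1 \<le> t \<Longrightarrow> 0 \<le> fr t" and gr_nonneg: "\<And>t. 1 \<le> t \<Longrightarrow> 0 \<le> gr t"
    and t0: "1 \<le> t0" and \<sigma>: "\<sigma> > 0" "\<sigma>u > 0"
    and marg: "\<And>i c. i < K \<Longrightarrow> subgaussian (\<nu> i) (\<lambda>x. x $ c) \<sigma>"
    and norm: "\<And>i z. i < K \<Longrightarrow> norm z = 1 \<Longrightarrow> subgaussian (\<nu> i) (\<lambda>x. x \<bullet> z) \<sigma>u"
  shows "measure M {w \<in> space M. \<not> (\<forall>t\<in>{t0..T}. good_event K (\<lambda>i. mean_vec (\<nu> i)) \<sigma> \<sigma>u fr gr A Y t w)}
    \<le> (\<Sum>n\<in>{1..T}. K * (2 * CARD('d) * exp (- fr (max n t0)) + 5 ^ CARD('d) * exp (- (gr (max n t0) / 4))))"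
proof -
  let ?B = "\<lambda>i n. coord_dev_event i n T (sqrt (2 * \<sigma>\<^sup>2 * fr (max n t0) * n))
    \<union> norm_dev_event i n T (sqrt (2 * \<sigma>u\<^sup>2 * gr (max n t0) * n))"
  have "measure M {w \<in> space M. \<not> (\<forall>t\<in>{t0..T}. good_event K (\<lambda>i. mean_vec (\<nu> i)) \<sigma> \<sigma>u fr gr A Y t w)}
      \<le> measure M (\<Union>i<K. \<Union>n\<in>{1..T}. ?B i n)"
    using not_good_window_subset[OF fr_mono gr_mono t0] by (rule finite_measure_mono) measurable
  also have "\<dots> \<le> (\<Sum>i<K. measure M (\<Union>n\<in>{1..T}. ?B i n))"
    by (rule finite_measure_subadditive_finite) auto
  also have "\<dots> \<le> (\<Sum>i<K. \<Sum>n\<in>{1..T}. measure M (?B i n))"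
    by (intro sum_mono finite_measure_subadditive_finite) auto
  also have "\<dots> \<le> (\<Sum>i<K. \<Sum>n\<in>{1..T}.
      2 * CARD('d) * exp (- fr (max n t0)) + 5 ^ CARD('d) * exp (- (gr (max n t0) / 4)))"
    using t0 by (intro sum_mono measure_dev_events_le \<sigma> marg norm fr_nonneg gr_nonneg) auto
  finally show ?thesis by (simp add: sum_distrib_left)
qed

lemma measure_not_good_event_le:
  assumes "\<And>T. measure M {w \<in> space M. \<not> (\<forall>t\<in>{1..T}. good_event K \<mu> \<sigma> \<sigma>u fr gr A Y t w)} \<le> c"
  shows "measure M {w \<in> space M. \<not> (\<forall>t\<ge>1. good_event K \<mu> \<sigma> \<sigma>u fr gr A Y t w)} \<le> c"
proof -
  define B where "B T = {w \<in> space M. \<not> (\<forall>t\<in>{1..T}. good_event K \<mu> \<sigma> \<sigma>u fr gr A Y t w)}" for T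
  have "B T \<in> sets M" for T unfolding B_def by measurable
  then have "range B \<subseteq> sets M" by auto
  moreover have "incseq B" unfolding incseq_def B_def by auto
  ultimately have "(\<lambda>T. measure M (B T)) \<longlonglongrightarrow> measure M (\<Union>T. B T)"
    by (rule finite_Lim_measure_incseq)
  moreover have "{w \<in> space M. \<not> (\<forall>t\<ge>1. good_event K \<mu> \<sigma> \<sigma>u fr gr A Y t w)} = (\<Union>T. B T)"
  proof (intro set_eqI iffI)
    fix w assume "w \<in> {w \<in> space M. \<not> (\<forall>t\<ge>1. good_event K \<mu> \<sigma> \<sigma>u fr gr A Y t w)}"
    then obtain t where "w \<in> space M" "1 \<le> t" "\<not> good_event K \<mu> \<sigma> \<sigma>u fr gr A Y t w" by auto
    then have "w \<in> B t" by (auto simp: B_def)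
    then show "w \<in> (\<Union>T. B T)" by blast
  qed (auto simp: B_def)
  ultimately show ?thesis
    using assms by (auto intro: LIMSEQ_le_const2 simp: B_def)
qed

lemma measure_not_good_window_le_powr:
  fixes \<alpha> k1 \<delta> :: real
  defines "fr \<equiv> \<lambda>t. ln (4 * k1 * real K * real CARD('d) * real t powr \<alpha> / \<delta>)"
    and "gr \<equiv> \<lambda>t. 4 * ln (4 * k1 * real K * 5 ^ CARD('d) * real t powr \<alpha> / \<delta>)"
  assumes K: "K \<ge> 1" and \<alpha>: "\<alpha> \<ge> 0" and k1: "k1 \<ge> 1" and \<delta>: "0 < \<delta>" "\<delta> \<le> 1"
    and t0: "1 \<le> t0" and \<sigma>: "\<sigma> > 0" "\<sigma>u > 0"
    and marg: "\<And>i c. i < K \<Longrightarrow> subgaussian (\<nu> i) (\<lambda>x. x $ c) \<sigma>"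
    and norm: "\<And>i z. i < K \<Longrightarrow> norm z = 1 \<Longrightarrow> subgaussian (\<nu> i) (\<lambda>x. x \<bullet> z) \<sigma>u"
  shows "measure M {w \<in> space M. \<not> (\<forall>t\<in>{t0..T}. good_event K (\<lambda>i. mean_vec (\<nu> i)) \<sigma> \<sigma>u fr gr A Y t w)}
    \<le> 3 * (\<delta> / (4 * k1)) * (\<Sum>n\<in>{1..T}. real (max n t0) powr (- \<alpha>))"
proof -
  have pos: "0 < k1" "0 < real K" "0 < real CARD('d)" "0 < (5::real) ^ CARD('d)"
    using K k1 by simp_all
  have "measure M {w \<in> space M. \<not> (\<forall>t\<in>{t0..T}. good_event K (\<lambda>i. mean_vec (\<nu> i)) \<sigma> \<sigma>u fr gr A Y t w)}
    \<le> (\<Sum>n\<in>{1..T}. K * (2 * CARD('d) * exp (- fr (max n t0)) + 5 ^ CARD('d) * exp (- (gr (max n t0) / 4))))"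
  proof (rule measure_not_good_window_le[OF _ _ _ _ t0 \<sigma> marg norm])
    fix s t :: nat assume "1 \<le> s" "s \<le> t"
    then show "fr s \<le> fr t" "gr s \<le> gr t"
      unfolding fr_def gr_def using pos \<alpha> \<delta>
      by (auto intro!: ln_radius_mono mult_left_mono[OF ln_radius_mono] simp del: ln_le_cancel_iff)
  next
    fix t :: nat assume t: "1 \<le> t"
    have "ln (4 * real CARD('d)) \<le> fr t"
      unfolding fr_def by (rule ln_radius_ge) (use K k1 \<alpha> \<delta> t in auto)
    moreover have "ln (4 * 5 ^ CARD('d)) \<le> ln (4 * k1 * real K * 5 ^ CARD('d) * real t powr \<alpha> / \<delta>)"
      by (rule ln_radius_ge) (use K k1 \<alpha> \<delta> t in auto)
    moreover have "1 \<le> real CARD('d)" by simp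
    then have "0 \<le> ln (4 * real CARD('d))" by (intro ln_ge_zero) linarith
    moreover have "1 \<le> (5::real) ^ CARD('d)" by simp
    then have "0 \<le> ln (4 * (5::real) ^ CARD('d))" by (intro ln_ge_zero) linarith
    ultimately show "0 \<le> fr t" "0 \<le> gr t"
      unfolding gr_def by linarith+
  qed
  also have "\<dots> = (\<Sum>n\<in>{1..T}. 3 * \<delta> / (4 * k1) * real (max n t0) powr (- \<alpha>))"
  proof (rule sum.cong)
    fix n assume "n \<in> {1..T}"
    then have "0 < real (max n t0)" by auto
    then have "exp (- fr (max n t0)) = \<delta> / (4 * k1 * K * CARD('d)) * real (max n t0) powr (- \<alpha>)"
      and "exp (- (gr (max n t0) / 4)) = \<delta> / (4 * k1 * K * 5 ^ CARD('d)) * real (max n t0) powr (- \<alpha>)"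
      unfolding fr_def gr_def using pos \<delta> by (simp_all add: exp_minus_ln_radius)
    then show "K * (2 * CARD('d) * exp (- fr (max n t0)) + 5 ^ CARD('d) * exp (- (gr (max n t0) / 4)))
        = 3 * \<delta> / (4 * k1) * real (max n t0) powr (- \<alpha>)"
      using pos by (simp add: field_simps)
  qed simp
  finally show ?thesis by (simp add: sum_distrib_left)
qed

end

theorem lemmaD3:
  fixes M :: "'w measure"
    and \<nu> :: "nat \<Rightarrow> (real ^ 'd) measure"
    and F :: "nat \<Rightarrow> 'w measure"
    and A :: "nat \<Rightarrow> 'w \<Rightarrow> nat"
    and Y :: "nat \<Rightarrow> 'w \<Rightarrow> real ^ 'd"
    and K :: nat and \<sigma> \<sigma>u \<alpha> k1 \<delta> :: real
  defines "d \<equiv> CARD('d)"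
  defines "f \<equiv> \<lambda>(t::real) (\<delta>'::real). ln (4 * k1 * real K * real d * t powr \<alpha> / \<delta>')"
  defines "g \<equiv> \<lambda>(t::real) (\<delta>'::real). 4 * ln (4 * k1 * real K * 5 ^ d * t powr \<alpha> / \<delta>')"
  defines "E \<equiv> good_event K (\<lambda>i. mean_vec (\<nu> i)) \<sigma> \<sigma>u (\<lambda>t. f (real t) \<delta>) (\<lambda>t. g (real t) \<delta>) A Y"
  assumes K: "K \<ge> 1"
    and sig: "\<sigma> > 0" "\<sigma>u > 0"
    and nu_prob: "\<And>i. i < K \<Longrightarrow> prob_space (\<nu> i)"
    and nu_sets: "\<And>i. i < K \<Longrightarrow> sets (\<nu> i) = sets borel"
    and marg_sg: "\<And>i c. i < K \<Longrightarrow> subgaussian (\<nu> i) (\<lambda>x. x $ c) \<sigma>"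
    and norm_sg: "\<And>i z. i < K \<Longrightarrow> norm z = 1 \<Longrightarrow> subgaussian (\<nu> i) (\<lambda>x. x \<bullet> z) \<sigma>u"
    and M: "prob_space M"
    and filt_sub: "\<And>t. subalgebra M (F t)"
    and filt_mono: "\<And>s t. s \<le> t \<Longrightarrow> sets (F s) \<subseteq> sets (F t)"
    and A_meas: "\<And>t. t \<ge> 1 \<Longrightarrow> A t \<in> measurable (F (t - 1)) (count_space UNIV)"
    and A_range: "\<And>t w. t \<ge> 1 \<Longrightarrow> w \<in> space M \<Longrightarrow> A t w < K"
    and Y_meas: "\<And>t. t \<ge> 1 \<Longrightarrow> Y t \<in> borel_measurable (F t)"
    and Y_law: "\<And>t i B S. t \<ge> 1 \<Longrightarrow> i < K \<Longrightarrow> B \<in> sets (F (t - 1)) \<Longrightarrow> S \<in> sets borel \<Longrightarrow>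
        measure M (B \<inter> {w \<in> space M. A t w = i} \<inter> (Y t -` S \<inter> space M))
          = measure M (B \<inter> {w \<in> space M. A t w = i}) * measure (\<nu> i) S"
    and alpha: "\<alpha> > 1"
    and k1: "k1 > 1 + 1 / (\<alpha> - 1)"
    and delta: "0 < \<delta>" "\<delta> < 1"
  shows "(\<forall>T::nat. T \<ge> 1 \<longrightarrow>
            measure M {w \<in> space M. \<not> (\<forall>t\<in>{nat \<lceil>real T / 2\<rceil>..T}. E t w)}
              \<le> \<delta> / (4 * k1) * (real T / 2) powr (1 - \<alpha>) * (ln (real T) + 1) * f (real T) \<delta>
                + \<delta> / (4 * k1) * (real T / 2) powr (1 - \<alpha>) * (ln (real T) + 1)
                    * f (real T) (\<delta> * real d / 5 ^ d))
       \<and> measure M {w \<in> space M. \<not> (\<forall>t\<ge>1. E t w)} \<le> \<delta>"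
proof -
  interpret bandit M F A Y \<nu> K
    using M nu_prob nu_sets filt_sub filt_mono A_meas Y_meas Y_law
    by (intro bandit.intro bandit_axioms.intro) auto
  have "\<alpha> / (\<alpha> - 1) = 1 + 1 / (\<alpha> - 1)" and "0 < 1 / (\<alpha> - 1)"
    using alpha by (simp_all add: field_simps)
  then have k1_ge: "\<alpha> / (\<alpha> - 1) \<le> k1" "1 \<le> k1"
    using k1 by linarith+
  have window: "measure M {w \<in> space M. \<not> (\<forall>t\<in>{t0..T}. E t w)}
      \<le> 3 * (\<delta> / (4 * k1)) * (\<Sum>n\<in>{1..T}. real (max n t0) powr (- \<alpha>))" if "1 \<le> t0" for t0 T
    unfolding E_def f_def g_def d_def
    using measure_not_good_window_le_powr[OF K _ k1_ge(2) _ _ that sig marg_sg norm_sg] alpha delta by simp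
  have "measure M {w \<in> space M. \<not> (\<forall>t\<in>{nat \<lceil>real T / 2\<rceil>..T}. E t w)}
      \<le> \<delta> / (4 * k1) * (real T / 2) powr (1 - \<alpha>) * (ln (real T) + 1) * f (real T) \<delta>
        + \<delta> / (4 * k1) * (real T / 2) powr (1 - \<alpha>) * (ln (real T) + 1) * f (real T) (\<delta> * real d / 5 ^ d)"
    (is "_ \<le> ?bound") if T: "T \<ge> 1" for T :: nat
  proof -
    have t0: "1 \<le> nat \<lceil>real T / 2\<rceil>" using T by (simp add: le_nat_iff)
    have "4 \<le> f (real T) \<delta> + f (real T) (\<delta> * real d / 5 ^ d)"
      unfolding f_def d_def using K k1_ge(2) alpha delta T by (intro four_le_ln_radii_sum) auto
    then have "3 * (\<delta> / (4 * k1)) * (\<Sum>n\<in>{1..T}. real (max n (nat \<lceil>real T / 2\<rceil>)) powr (- \<alpha>)) \<le> ?bound"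
      using k1_ge(2) delta by (intro half_window_sum_le[OF alpha T]) auto
    with window[OF t0] show ?thesis by (rule order_trans)
  qed
  moreover have "measure M {w \<in> space M. \<not> (\<forall>t\<ge>1. E t w)} \<le> \<delta>"
  proof -
    have "measure M {w \<in> space M. \<not> (\<forall>t\<in>{1..T}. E t w)} \<le> \<delta>" for T
      using order_trans[OF window sum_max_1_powr_minus_le[OF alpha k1_ge(1) less_imp_le[OF delta(1)]]] by simp
    then show ?thesis
      unfolding E_def by (rule measure_not_good_event_le)
  qed
  ultimately show ?thesis by blast
qed

end
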